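(* Let $\langle\langle\cdot,\cdot\rangle\rangle$ be the $L_2$ set inner product $\langle\langle A,B\rangle\rangle=\int_{\mathbb{R}^n} h_A(x)h_B(x)\,d\phi(x)$ on $\mathcal{K}_n$. Then: (1) for all $A\in\mathcal{K}_n$, $k_A\in A$; (2) if $A,B\in\mathcal{K}_n$ are centered, then $\langle\langle A,B\rangle\rangle=0$ if and only if $A=\{0\}$ or $B=\{0\}$; (3) if $A,B\in\mathcal{K}_n$ with $0\in A\subseteq B$, then $\langle\langle A,A\rangle\rangle\leq\langle\langle B,B\rangle\rangle$.
   Context: A convex body is a closed, bounded, non-empty convex subset of $\mathbb{R}^n$; $\mathcal{K}_n$ is the set of convex bodies in $\mathbb{R}^n$. The support function of $A$ is $h_A(x)=\sup\{a\cdot x: a\in A\}$. $\phi$ is the standard Gaussian probability measure on $\mathbb{R}^n$. For this set inner product the induced inner product on singletons, $\langle a,b\rangle=\langle\langle\{a\},\{b\}\rangle\rangle$, is the usual dot product. The center of $A$ is the unique $k_A\in\mathbb{R}^n$ with $\langle\langle A,\{x\}\rangle\rangle=\langle k_A,x\rangle$ for all $x\in\mathbb{R}^n$; explicitly $k_A=\int z\,h_A(z)\,d\phi(z)$ (the Steiner point). $A$ is centered if $k_A=0$. *)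

theory Defs
  imports "HOL-Probability.Probability"
begin

definition convex_body :: "'a::euclidean_space set \<Rightarrow> bool" where
  "convex_body A \<longleftrightarrow> convex A \<and> compact A \<and> A \<noteq> {}"

definition supp :: "'a::euclidean_space set \<Rightarrow> 'a \<Rightarrow> real" where
  "supp A x = (SUP a\<in>A. a \<bullet> x)"

definition gauss_density :: "'a::euclidean_space \<Rightarrow> real" where
  "gauss_density x = (2 * pi) powr (- real DIM('a) / 2) * exp (- (norm x)\<^sup>2 / 2)"

definition gauss :: "'a::euclidean_space measure" where
  "gauss = density lborel (\<lambda>x. ennreal (gauss_density x))"

definition set_inner :: "'a::euclidean_space set \<Rightarrow> 'a set \<Rightarrow> real" where
  "set_inner A B = (\<integral>x. supp A x * supp B x \<partial>gauss)"

definition center :: "'a::euclidean_space set \<Rightarrow> 'a" where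
  "center A = (\<integral>z. supp A z *\<^sub>R z \<partial>gauss)"

end

theory Submission
  imports Defs
begin

text \<open>
  Translating the Gaussian by \<open>t u\<close> (Cameron--Martin) and expanding the density to first
  order gives \<open>\<integral> h\<^sub>A(z + t u) d\<phi> = \<integral> h\<^sub>A d\<phi> + t \<langle>u, k\<^sub>A\<rangle> + O(t\<^sup>2)\<close>.  Comparing with
  sublinearity, \<open>h\<^sub>A(z + t u) \<le> h\<^sub>A(z) + t h\<^sub>A(u)\<close>, yields \<open>\<langle>u, k\<^sub>A\<rangle> \<le> h\<^sub>A(u)\<close> for all \<open>u\<close>,
  so \<open>k\<^sub>A \<in> A\<close> by separation.  If \<open>A\<close> is centered and \<open>h\<^sub>A(u) = 0\<close>, comparing instead with
  convexity, \<open>h\<^sub>A(z + t u) \<le> (1 - t) h\<^sub>A(z) + t h\<^sub>A(z + u)\<close>, shows that the nonnegative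
  continuous function \<open>h\<^sub>A(z) - h\<^sub>A(z + u)\<close> has integral \<open>\<le> 0\<close>; it vanishes, so
  \<open>h\<^sub>A(-u) = 0\<close>.  Hence two centered bodies other than \<open>{0}\<close> have a common direction in
  which both support functions are positive, and there the continuous integrand
  \<open>h\<^sub>A h\<^sub>B \<ge> 0\<close> of \<open>\<langle>\<langle>A, B\<rangle>\<rangle>\<close> is positive.  Monotonicity follows from \<open>0 \<le> h\<^sub>A \<le> h\<^sub>B\<close>.
\<close>

lemma supp_upper:
  fixes A :: "'a::euclidean_space set"
  assumes "bounded A" "a \<in> A"
  shows "a \<bullet> x \<le> supp A x"
proof -
  obtain R where "\<forall>a\<in>A. norm a \<le> R" using assms(1) bounded_iff by blast
  then have "bdd_above ((\<lambda>a. a \<bullet> x) ` A)"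
    by (intro bdd_aboveI2[where M = "R * norm x"])
      (metis Cauchy_Schwarz_ineq2 abs_le_D1 mult_right_mono norm_ge_zero order_trans)
  then show ?thesis
    unfolding supp_def using assms(2) by (rule cSUP_upper2) simp
qed

lemma supp_least:
  fixes A :: "'a::euclidean_space set"
  assumes "A \<noteq> {}" "\<And>a. a \<in> A \<Longrightarrow> a \<bullet> x \<le> c"
  shows "supp A x \<le> c"
  unfolding supp_def using assms by (intro cSUP_least) auto

lemma supp_mono:
  fixes A B :: "'a::euclidean_space set"
  assumes "A \<noteq> {}" "bounded B" "A \<subseteq> B"
  shows "supp A x \<le> supp B x"
  using assms by (intro supp_least) (auto intro: supp_upper)

lemma supp_nonneg:
  fixes A :: "'a::euclidean_space set"
  assumes "bounded A" "0 \<in> A"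
  shows "0 \<le> supp A x"
  using supp_upper[OF assms, of x] by simp

lemma supp_singleton_zero [simp]: "supp {0} x = 0"
  by (simp add: supp_def)

lemma supp_add_le:
  fixes A :: "'a::euclidean_space set"
  assumes "bounded A" "A \<noteq> {}"
  shows "supp A (x + y) \<le> supp A x + supp A y"
  using assms(2)
proof (rule supp_least)
  fix a assume "a \<in> A"
  then show "a \<bullet> (x + y) \<le> supp A x + supp A y"
    using supp_upper[OF assms(1)] by (simp add: inner_add_right add_mono)
qed

lemma supp_scaleR:
  fixes A :: "'a::euclidean_space set"
  assumes "bounded A" "A \<noteq> {}" "0 \<le> c"
  shows "supp A (c *\<^sub>R x) = c * supp A x"
proof (cases "c = 0")
  case True
  obtain a where "a \<in> A" using assms(2) by blast
  then have "supp A 0 = 0"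
    using supp_upper[OF assms(1), of a 0] supp_least[OF assms(2), of 0 0] by simp
  then show ?thesis using True by simp
next
  case False
  with assms(3) have c: "0 < c" by simp
  have "supp A (c *\<^sub>R x) \<le> c * supp A x"
    using assms(2) by (rule supp_least) (use supp_upper[OF assms(1)] c in \<open>simp add: mult_left_mono\<close>)
  moreover have "supp A x \<le> supp A (c *\<^sub>R x) / c"
    using assms(2) by (rule supp_least)
      (use supp_upper[OF assms(1), of _ "c *\<^sub>R x"] c in \<open>simp add: pos_le_divide_eq mult.commute\<close>)
  ultimately show ?thesis
    using c by (simp add: pos_le_divide_eq mult.commute)
qed

lemma convex_on_supp:
  fixes A :: "'a::euclidean_space set"
  assumes "bounded A" "A \<noteq> {}"
  shows "convex_on UNIV (supp A)"
proof (rule convex_onI)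
  fix x y :: 'a and t :: real
  assume "0 < t" "t < 1"
  then show "supp A ((1 - t) *\<^sub>R x + t *\<^sub>R y) \<le> (1 - t) * supp A x + t * supp A y"
    using supp_add_le[OF assms] supp_scaleR[OF assms] by (metis less_eq_real_def diff_ge_0_iff_ge)
qed simp

lemma continuous_on_supp:
  fixes A :: "'a::euclidean_space set"
  assumes "bounded A" "A \<noteq> {}"
  shows "continuous_on UNIV (supp A)"
  using convex_on_supp[OF assms] by (rule convex_on_continuous[OF open_UNIV])

lemma borel_measurable_supp:
  fixes A :: "'a::euclidean_space set"
  assumes "bounded A" "A \<noteq> {}"
  shows "supp A \<in> borel_measurable borel"
  using continuous_on_supp[OF assms] by (rule borel_measurable_continuous_onI)

lemma le_exp_self: "x \<le> exp x" for x :: real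
  using exp_ge_add_one_self[of x] by linarith

definition exp_growth :: "('a::real_normed_vector \<Rightarrow> 'b::real_normed_vector) \<Rightarrow> bool" where
  "exp_growth f \<longleftrightarrow> (\<exists>K c. \<forall>y. norm (f y) \<le> K * exp (c * norm y))"

lemma exp_growthI: "(\<And>y. norm (f y) \<le> K * exp (c * norm y)) \<Longrightarrow> exp_growth f"
  unfolding exp_growth_def by blast

lemma exp_growthE:
  assumes "exp_growth f"
  obtains K c where "0 \<le> K" "\<And>y. norm (f y) \<le> K * exp (c * norm y)"
proof -
  obtain K c where Kc: "\<And>y. norm (f y) \<le> K * exp (c * norm y)"
    using assms unfolding exp_growth_def by blast
  moreover have "0 \<le> K"
    using order_trans[OF norm_ge_zero Kc[of 0]] by simp
  ultimately show ?thesis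
    using that by blast
qed

lemma exp_growth_scaleR:
  fixes f :: "'a::real_normed_vector \<Rightarrow> real" and g :: "'a \<Rightarrow> 'b::real_normed_vector"
  assumes "exp_growth f" "exp_growth g"
  shows "exp_growth (\<lambda>y. f y *\<^sub>R g y)"
proof -
  obtain K c where K: "0 \<le> K" "\<And>y. norm (f y) \<le> K * exp (c * norm y)"
    using exp_growthE[OF assms(1)] by blast
  obtain L d where L: "0 \<le> L" "\<And>y. norm (g y) \<le> L * exp (d * norm y)"
    using exp_growthE[OF assms(2)] by blast
  show ?thesis
  proof (rule exp_growthI)
    fix y
    have "norm (f y *\<^sub>R g y) \<le> K * exp (c * norm y) * (L * exp (d * norm y))"
      using K L by (simp del: real_norm_def) (intro mult_mono, auto)
    moreover have "exp ((c + d) * norm y) = exp (c * norm y) * exp (d * norm y)"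
      by (simp add: distrib_right exp_add)
    ultimately show "norm (f y *\<^sub>R g y) \<le> (K * L) * exp ((c + d) * norm y)"
      by (simp add: mult_ac)
  qed
qed

lemma exp_growth_translate:
  assumes "exp_growth f"
  shows "exp_growth (\<lambda>z. f (z + v))"
proof -
  obtain K c where K: "0 \<le> K" "\<And>y. norm (f y) \<le> K * exp (c * norm y)"
    using exp_growthE[OF assms] by blast
  show ?thesis
  proof (rule exp_growthI)
    fix z
    have "\<bar>norm (z + v) - norm z\<bar> \<le> norm v"
      using norm_triangle_ineq3[of "z + v" z] by simp
    then have "c * (norm (z + v) - norm z) \<le> \<bar>c\<bar> * norm v"
      by (metis abs_ge_self abs_ge_zero abs_mult mult_left_mono order_trans)
    then have "K * exp (c * norm (z + v)) \<le> K * (exp (\<bar>c\<bar> * norm v) * exp (c * norm z))"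
      using K(1) by (intro mult_left_mono) (simp_all add: algebra_simps flip: exp_add)
    then show "norm (f (z + v)) \<le> (K * exp (\<bar>c\<bar> * norm v)) * exp (c * norm z)"
      using K(2)[of "z + v"] by (simp add: mult.assoc)
  qed
qed

lemma exp_growth_id: "exp_growth (\<lambda>y. y)"
  by (rule exp_growthI[where K = 1 and c = 1]) (simp add: le_exp_self)

lemma exp_growth_inner_left: "exp_growth (\<lambda>y. u \<bullet> y)"
proof (rule exp_growthI[where K = "norm u" and c = 1])
  fix y
  show "norm (u \<bullet> y) \<le> norm u * exp (1 * norm y)"
    using Cauchy_Schwarz_ineq2[of u y] mult_left_mono[OF le_exp_self[of "norm y"] norm_ge_zero[of u]]
    by simp
qed

lemma exp_growth_supp:
  fixes A :: "'a::euclidean_space set"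
  assumes "bounded A" "A \<noteq> {}"
  shows "exp_growth (supp A)"
proof -
  obtain R where R: "\<And>a. a \<in> A \<Longrightarrow> norm a \<le> R" using assms(1) bounded_iff by blast
  obtain a where a: "a \<in> A" using assms(2) by blast
  have "0 \<le> R" using R[OF a] norm_ge_zero order_trans by blast
  have le: "a \<bullet> x \<le> R * norm x" if "a \<in> A" for a x
    by (metis Cauchy_Schwarz_ineq2 R abs_le_D1 mult_right_mono norm_ge_zero order_trans that)
  show ?thesis
  proof (rule exp_growthI[where K = R and c = 1])
    fix x
    have "supp A x \<le> R * norm x" using assms(2) by (rule supp_least) (rule le)
    moreover have "- (R * norm x) \<le> supp A x"
      using le[OF a, of "- x"] supp_upper[OF assms(1) a, of x] by simp
    moreover have "R * norm x \<le> R * exp (norm x)"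
      using \<open>0 \<le> R\<close> le_exp_self by (intro mult_left_mono)
    ultimately show "norm (supp A x) \<le> R * exp (1 * norm x)"
      by simp
  qed
qed

lemma norm_sq_eq_sum_inner_sq:
  fixes x :: "'a::euclidean_space"
  shows "(norm x)\<^sup>2 = (\<Sum>b\<in>Basis. (x \<bullet> b)\<^sup>2)"
  unfolding power2_norm_eq_inner euclidean_inner[of x x] by (simp add: power2_eq_square)

lemma gauss_density_pos: "0 < gauss_density x"
  by (simp add: gauss_density_def)

lemma borel_measurable_gauss_density [measurable]: "gauss_density \<in> borel_measurable borel"
  unfolding gauss_density_def[abs_def] by measurable

lemma sets_gauss [measurable_cong, simp]: "sets gauss = sets borel"
  by (simp add: gauss_def)

lemma space_gauss [simp]: "space gauss = UNIV"
  by (simp add: gauss_def)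

lemma gauss_density_prod:
  fixes x :: "'a::euclidean_space"
  shows "gauss_density x = (\<Prod>b\<in>Basis. std_normal_density (x \<bullet> b))"
proof -
  have "(2 * pi) powr (- real DIM('a) / 2) = ((2 * pi) powr (- 1 / 2)) powr real DIM('a)"
    by (simp add: powr_powr)
  also have "\<dots> = (1 / sqrt (2 * pi)) ^ DIM('a)"
    by (simp add: powr_realpow powr_minus_divide powr_half_sqrt[symmetric] del: powr_minus)
  finally have "(2 * pi) powr (- real DIM('a) / 2) = (1 / sqrt (2 * pi)) ^ DIM('a)" .
  moreover have "exp (- (norm x)\<^sup>2 / 2) = (\<Prod>b\<in>Basis. exp (- (x \<bullet> b)\<^sup>2 / 2))"
    by (simp add: norm_sq_eq_sum_inner_sq exp_sum[symmetric] sum_divide_distrib sum_negf)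
  moreover have "(\<Prod>b\<in>Basis. std_normal_density (x \<bullet> b))
      = (\<Prod>b\<in>(Basis :: 'a set). 1 / sqrt (2 * pi)) * (\<Prod>b\<in>Basis. exp (- (x \<bullet> b)\<^sup>2 / 2))"
    unfolding std_normal_density_def by (rule prod.distrib)
  ultimately show ?thesis
    by (simp add: gauss_density_def)
qed

lemma nn_integral_std_normal_exp_sq:
  fixes l :: real
  assumes "l < 1 / 2"
  shows "(\<integral>\<^sup>+x. ennreal (std_normal_density x * exp (l * x\<^sup>2)) \<partial>lborel) = ennreal (1 / sqrt (1 - 2 * l))"
proof -
  define \<sigma> where "\<sigma> = 1 / sqrt (1 - 2 * l)"
  have "0 < \<sigma>" using assms by (simp add: \<sigma>_def)
  have "std_normal_density x * exp (l * x\<^sup>2) = \<sigma> * normal_density 0 \<sigma> x" for x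
  proof -
    have \<sigma>_sq: "\<sigma>\<^sup>2 = 1 / (1 - 2 * l)" using assms by (simp add: \<sigma>_def power_divide)
    have "- x\<^sup>2 / (2 * \<sigma>\<^sup>2) = - x\<^sup>2 / 2 + l * x\<^sup>2"
      unfolding \<sigma>_sq using assms by (simp add: field_simps)
    then have "\<sigma> * normal_density 0 \<sigma> x = 1 / sqrt (2 * pi) * exp (- x\<^sup>2 / 2 + l * x\<^sup>2)"
      using \<open>0 < \<sigma>\<close> by (simp add: normal_density_def real_sqrt_mult)
    then show ?thesis
      by (simp add: std_normal_density_def flip: exp_add)
  qed
  moreover have "(\<integral>\<^sup>+x. ennreal (normal_density 0 \<sigma> x) \<partial>lborel) = 1"
    using \<open>0 < \<sigma>\<close> by (subst nn_integral_eq_integral) auto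
  ultimately show ?thesis
    using \<open>0 < \<sigma>\<close> by (simp add: ennreal_mult nn_integral_cmult flip: \<sigma>_def)
qed

lemma nn_integral_gauss_exp_norm_sq:
  fixes l :: real
  assumes "l < 1 / 2"
  shows "(\<integral>\<^sup>+x. ennreal (exp (l * (norm x)\<^sup>2)) \<partial>(gauss :: 'a::euclidean_space measure))
    = ennreal ((1 / sqrt (1 - 2 * l)) ^ DIM('a))"
proof -
  have "(\<integral>\<^sup>+x. ennreal (exp (l * (norm x)\<^sup>2)) \<partial>(gauss :: 'a measure))
      = (\<integral>\<^sup>+x. ennreal (gauss_density (x :: 'a) * exp (l * (norm x)\<^sup>2)) \<partial>lborel)"
    unfolding gauss_def by (subst nn_integral_density) (auto simp: ennreal_mult' gauss_density_pos less_imp_le)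
  also have "\<dots> = (\<integral>\<^sup>+x. (\<Prod>b\<in>Basis. ennreal (std_normal_density ((x :: 'a) \<bullet> b) * exp (l * (x \<bullet> b)\<^sup>2))) \<partial>lborel)"
  proof (intro nn_integral_cong)
    fix x :: 'a
    have "exp (l * (norm x)\<^sup>2) = (\<Prod>b\<in>Basis. exp (l * (x \<bullet> b)\<^sup>2))"
      by (simp add: norm_sq_eq_sum_inner_sq exp_sum[symmetric] sum_distrib_left)
    then show "ennreal (gauss_density x * exp (l * (norm x)\<^sup>2))
        = (\<Prod>b\<in>Basis. ennreal (std_normal_density (x \<bullet> b) * exp (l * (x \<bullet> b)\<^sup>2)))"
      by (simp add: gauss_density_prod prod.distrib prod_ennreal)
  qed
  also have "\<dots> = (\<Prod>b\<in>(Basis :: 'a set). \<integral>\<^sup>+x. ennreal (std_normal_density x * exp (l * x\<^sup>2)) \<partial>lborel)"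
    by (rule nn_integral_lborel_prod) auto
  also have "\<dots> = ennreal ((1 / sqrt (1 - 2 * l)) ^ DIM('a))"
    using assms by (simp add: nn_integral_std_normal_exp_sq ennreal_power)
  finally show ?thesis .
qed

lemma prob_space_gauss: "prob_space gauss"
proof
  show "emeasure gauss (space gauss) = 1"
    using nn_integral_gauss_exp_norm_sq[of 0] by (simp add: emeasure_density gauss_def)
qed

lemma integrable_gauss_exp_growth:
  fixes f :: "'a::euclidean_space \<Rightarrow> 'b::{banach, second_countable_topology}"
  assumes [measurable]: "f \<in> borel_measurable borel" and "exp_growth f"
  shows "integrable gauss f"
proof -
  obtain K c where growth: "\<And>y. norm (f y) \<le> K * exp (c * norm y)"
    using assms(2) exp_growthE by blast
  show ?thesis
  proof (rule Bochner_Integration.integrable_bound)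
    have "(\<integral>\<^sup>+y. ennreal (exp (1 / 4 * (norm y)\<^sup>2)) \<partial>(gauss :: 'a measure)) < \<infinity>"
      using nn_integral_gauss_exp_norm_sq[of "1 / 4", where 'a = 'a] by simp
    then have "integrable gauss (\<lambda>y::'a. exp (1 / 4 * (norm y)\<^sup>2))"
      by (intro integrableI_nonneg) auto
    then show "integrable gauss (\<lambda>y::'a. (\<bar>K\<bar> * exp (c\<^sup>2)) * exp (1 / 4 * (norm y)\<^sup>2))"
      by (rule integrable_mult_right)
    show "AE y in gauss. norm (f y) \<le> norm (\<bar>K\<bar> * exp (c\<^sup>2) * exp (1 / 4 * (norm y)\<^sup>2))"
    proof (rule AE_I2)
      fix y :: 'a
      have "c * norm y \<le> c\<^sup>2 + 1 / 4 * (norm y)\<^sup>2"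
        using sum_squares_ge_zero[of "c - norm y / 2" 0] by (simp add: power2_eq_square field_simps)
      then have "exp (c * norm y) \<le> exp (c\<^sup>2) * exp (1 / 4 * (norm y)\<^sup>2)"
        by (simp add: exp_add[symmetric])
      then have "\<bar>K\<bar> * exp (c * norm y) \<le> \<bar>K\<bar> * (exp (c\<^sup>2) * exp (1 / 4 * (norm y)\<^sup>2))"
        by (rule mult_left_mono) simp
      moreover have "norm (f y) \<le> \<bar>K\<bar> * exp (c * norm y)"
        using growth[of y] by (smt (verit) exp_gt_zero mult_right_mono)
      ultimately show "norm (f y) \<le> norm (\<bar>K\<bar> * exp (c\<^sup>2) * exp (1 / 4 * (norm y)\<^sup>2))"
        by (simp add: mult.assoc)
    qed
  qed simp
qed

lemma integral_gauss_translate: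
  fixes v :: "'a::euclidean_space" and f :: "'a \<Rightarrow> real"
  assumes [measurable]: "f \<in> borel_measurable borel"
  shows "(\<integral>z. f (z + v) \<partial>gauss) = (\<integral>y. f y * exp (v \<bullet> y - (norm v)\<^sup>2 / 2) \<partial>gauss)"
proof -
  have density_shift: "gauss_density (y - v) = gauss_density y * exp (v \<bullet> y - (norm v)\<^sup>2 / 2)" for y
  proof -
    have "- (norm (y - v))\<^sup>2 / 2 = - (norm y)\<^sup>2 / 2 + (v \<bullet> y - (norm v)\<^sup>2 / 2)"
      by (simp add: power2_norm_eq_inner inner_diff_left inner_diff_right inner_commute field_simps)
    then have "exp (- (norm (y - v))\<^sup>2 / 2) = exp (- (norm y)\<^sup>2 / 2) * exp (v \<bullet> y - (norm v)\<^sup>2 / 2)"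
      by (simp only: exp_add)
    then show ?thesis
      by (simp add: gauss_density_def)
  qed
  have "(\<integral>z. f (z + v) \<partial>gauss) = (\<integral>z. gauss_density z * f (z + v) \<partial>lborel)"
    unfolding gauss_def by (subst integral_density) (auto simp: gauss_density_pos less_imp_le)
  also have "\<dots> = (\<integral>z. gauss_density z * f (z + v) \<partial>distr lborel borel ((+) (- v)))"
    by (simp add: lborel_distr_plus)
  also have "\<dots> = (\<integral>y. gauss_density (y - v) * f y \<partial>lborel)"
    by (subst integral_distr) (auto simp: add.commute)
  also have "\<dots> = (\<integral>y. gauss_density y * (f y * exp (v \<bullet> y - (norm v)\<^sup>2 / 2)) \<partial>lborel)"
    by (simp add: density_shift mult_ac)
  also have "\<dots> = (\<integral>y. f y * exp (v \<bullet> y - (norm v)\<^sup>2 / 2) \<partial>gauss)"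
    unfolding gauss_def by (subst integral_density) (auto simp: gauss_density_pos less_imp_le)
  finally show ?thesis .
qed

lemma abs_exp_minus_one_minus_le: "\<bar>exp s - 1 - s\<bar> \<le> exp \<bar>s\<bar> * s\<^sup>2 / 2" for s :: real
proof -
  obtain \<theta> where \<theta>: "\<bar>\<theta>\<bar> \<le> \<bar>s\<bar>" "exp s = (\<Sum>m<2. s ^ m / fact m) + exp \<theta> / fact 2 * s ^ 2"
    using Maclaurin_exp_le[of s 2] by blast
  then have remainder: "exp s - 1 - s = exp \<theta> * s\<^sup>2 / 2"
    by (simp add: numeral_2_eq_2)
  have "\<bar>exp s - 1 - s\<bar> = exp \<theta> * s\<^sup>2 / 2"
    unfolding remainder by simp
  moreover have "exp \<theta> \<le> exp \<bar>s\<bar>" using \<theta>(1) by simp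
  ultimately show ?thesis
    by (simp add: mult_right_mono divide_right_mono)
qed

lemma abs_exp_quadratic_remainder_le:
  fixes t a b :: real
  assumes t: "\<bar>t\<bar> \<le> 1" and b: "0 \<le> b"
  shows "\<bar>exp (t * a - t\<^sup>2 * b) - 1 - t * a\<bar> \<le> 2 * t\<^sup>2 * exp (2 * (\<bar>a\<bar> + b))"
proof -
  define s where "s = t * a - t\<^sup>2 * b"
  define M where "M = \<bar>a\<bar> + b"
  have "0 \<le> M" using b by (simp add: M_def)
  have t_sq: "t\<^sup>2 \<le> \<bar>t\<bar>"
    using t mult_left_le[of "\<bar>t\<bar>" "\<bar>t\<bar>"] by (simp add: power2_eq_square)
  have "\<bar>s\<bar> \<le> \<bar>t * a\<bar> + \<bar>t\<^sup>2 * b\<bar>"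
    unfolding s_def by (rule abs_triangle_ineq4)
  also have "\<dots> \<le> \<bar>t\<bar> * \<bar>a\<bar> + \<bar>t\<bar> * b"
    using t_sq b by (simp add: abs_mult mult_right_mono)
  finally have s_le: "\<bar>s\<bar> \<le> \<bar>t\<bar> * M"
    by (simp add: M_def distrib_left)
  then have "\<bar>s\<bar> \<le> M"
    using t \<open>0 \<le> M\<close> mult_left_le_one_le[of M "\<bar>t\<bar>"] by simp
  have "s\<^sup>2 \<le> (\<bar>t\<bar> * M)\<^sup>2"
    using s_le by (metis abs_ge_zero power2_abs power_mono)
  then have "s\<^sup>2 \<le> t\<^sup>2 * M\<^sup>2"
    by (simp add: power_mult_distrib)
  have "\<bar>exp s - 1 - s\<bar> \<le> exp \<bar>s\<bar> * s\<^sup>2 / 2"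
    by (rule abs_exp_minus_one_minus_le)
  also have "\<dots> \<le> exp M * (t\<^sup>2 * M\<^sup>2) / 2"
    using \<open>\<bar>s\<bar> \<le> M\<close> \<open>s\<^sup>2 \<le> t\<^sup>2 * M\<^sup>2\<close> by (intro divide_right_mono mult_mono) auto
  also have "\<dots> = t\<^sup>2 * (exp M * (M\<^sup>2 / 2))"
    by simp
  also have "\<dots> \<le> t\<^sup>2 * (exp M * exp M)"
    using exp_lower_Taylor_quadratic[OF \<open>0 \<le> M\<close>] \<open>0 \<le> M\<close> by (intro mult_left_mono) auto
  finally have taylor: "\<bar>exp s - 1 - s\<bar> \<le> t\<^sup>2 * exp (2 * M)"
    by (simp add: mult_exp_exp)
  have "b \<le> exp (2 * M)"
    using exp_ge_add_one_self[of "2 * M"] \<open>0 \<le> M\<close> M_def by linarith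
  then have "t\<^sup>2 * b \<le> t\<^sup>2 * exp (2 * M)"
    by (simp add: mult_left_mono)
  moreover have "exp s - 1 - t * a = (exp s - 1 - s) - t\<^sup>2 * b"
    by (simp add: s_def)
  moreover have "0 \<le> t\<^sup>2 * b"
    using b by simp
  ultimately have "\<bar>exp s - 1 - t * a\<bar> \<le> 2 * t\<^sup>2 * exp (2 * M)"
    using taylor by (simp only: abs_le_iff) linarith
  then show ?thesis
    by (simp add: s_def M_def)
qed

lemma abs_exp_gauss_shift_remainder_le:
  fixes u y :: "'a::real_inner" and t :: real
  assumes t: "\<bar>t\<bar> \<le> 1"
  shows "\<bar>exp (t * (u \<bullet> y) - t\<^sup>2 * ((norm u)\<^sup>2 / 2)) - 1 - t * (u \<bullet> y)\<bar>
    \<le> t\<^sup>2 * (2 * exp ((norm u)\<^sup>2) * exp (2 * norm u * norm y))"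
proof -
  have "2 * (\<bar>u \<bullet> y\<bar> + (norm u)\<^sup>2 / 2) \<le> (norm u)\<^sup>2 + 2 * (norm u * norm y)"
    using Cauchy_Schwarz_ineq2[of u y] by (simp add: algebra_simps)
  then have "exp (2 * (\<bar>u \<bullet> y\<bar> + (norm u)\<^sup>2 / 2)) \<le> exp ((norm u)\<^sup>2) * exp (2 * norm u * norm y)"
    by (simp add: mult.assoc flip: exp_add)
  then have "2 * t\<^sup>2 * exp (2 * (\<bar>u \<bullet> y\<bar> + (norm u)\<^sup>2 / 2))
      \<le> t\<^sup>2 * (2 * exp ((norm u)\<^sup>2) * exp (2 * norm u * norm y))"
    by (simp add: mult_left_mono mult.assoc)
  moreover have "\<bar>exp (t * (u \<bullet> y) - t\<^sup>2 * ((norm u)\<^sup>2 / 2)) - 1 - t * (u \<bullet> y)\<bar>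
      \<le> 2 * t\<^sup>2 * exp (2 * (\<bar>u \<bullet> y\<bar> + (norm u)\<^sup>2 / 2))"
    by (rule abs_exp_quadratic_remainder_le[OF t]) simp
  ultimately show ?thesis
    by (rule order_trans[rotated])
qed

lemma integral_gauss_translate_expansion:
  fixes f :: "'a::euclidean_space \<Rightarrow> real" and u :: 'a
  assumes [measurable]: "f \<in> borel_measurable borel" and "exp_growth f"
  obtains C where "\<And>t. \<bar>t\<bar> \<le> 1 \<Longrightarrow>
    \<bar>(\<integral>z. f (z + t *\<^sub>R u) \<partial>gauss) - (\<integral>y. f y \<partial>gauss) - t * (\<integral>y. f y * (u \<bullet> y) \<partial>gauss)\<bar> \<le> C * t\<^sup>2"
proof -
  obtain K c where K: "0 \<le> K" "\<And>y. norm (f y) \<le> K * exp (c * norm y)"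
    using exp_growthE[OF assms(2)] by blast
  define G where "G y = 2 * K * exp ((norm u)\<^sup>2) * exp ((c + 2 * norm u) * norm y)" for y :: 'a
  have G_nonneg: "0 \<le> G y" for y
    using K(1) by (simp add: G_def)
  have int_G: "integrable gauss G"
    using G_nonneg
    by (intro integrable_gauss_exp_growth exp_growthI[where K = "2 * K * exp ((norm u)\<^sup>2)"])
      (auto simp: G_def[abs_def])
  have int_f: "integrable gauss f"
    using assms by (rule integrable_gauss_exp_growth)
  have int_fu: "integrable gauss (\<lambda>y. f y * (u \<bullet> y))"
    by (rule integrable_gauss_exp_growth)
      (measurable, use exp_growth_scaleR[OF assms(2) exp_growth_inner_left] in simp)
  show ?thesis
  proof (rule that[of "integral\<^sup>L gauss G"])
    fix t :: real
    assume t: "\<bar>t\<bar> \<le> 1"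
    define F where "F y = f y * (exp (t * (u \<bullet> y) - t\<^sup>2 * ((norm u)\<^sup>2 / 2)) - 1 - t * (u \<bullet> y))" for y
    have F_le: "\<bar>F y\<bar> \<le> t\<^sup>2 * G y" for y
    proof -
      have "\<bar>F y\<bar> \<le> K * exp (c * norm y) * (t\<^sup>2 * (2 * exp ((norm u)\<^sup>2) * exp (2 * norm u * norm y)))"
        unfolding F_def abs_mult using K abs_exp_gauss_shift_remainder_le[OF t] by (intro mult_mono) auto
      moreover have "exp ((c + 2 * norm u) * norm y) = exp (c * norm y) * exp (2 * norm u * norm y)"
        by (simp add: distrib_right exp_add)
      ultimately show ?thesis
        by (simp add: G_def mult_ac)
    qed
    have [measurable]: "F \<in> borel_measurable borel"
      unfolding F_def[abs_def] by measurable
    have int_F: "integrable gauss F"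
    proof (rule Bochner_Integration.integrable_bound)
      show "integrable gauss (\<lambda>y. t\<^sup>2 * G y)"
        using int_G by (rule integrable_mult_right)
      show "AE y in gauss. norm (F y) \<le> norm (t\<^sup>2 * G y)"
        using F_le G_nonneg by (intro AE_I2) (simp add: abs_mult)
    qed simp
    have "(\<integral>z. f (z + t *\<^sub>R u) \<partial>gauss)
        = (\<integral>y. f y * exp (t * (u \<bullet> y) - t\<^sup>2 * ((norm u)\<^sup>2 / 2)) \<partial>gauss)"
      using integral_gauss_translate[of f "t *\<^sub>R u"] by (simp add: power_mult_distrib)
    also have "\<dots> = (\<integral>y. F y + f y + t * (f y * (u \<bullet> y)) \<partial>gauss)"
      by (simp add: F_def algebra_simps)
    also have "\<dots> = (\<integral>y. F y \<partial>gauss) + (\<integral>y. f y \<partial>gauss) + t * (\<integral>y. f y * (u \<bullet> y) \<partial>gauss)"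
      using int_F int_f int_fu by simp
    finally have "(\<integral>z. f (z + t *\<^sub>R u) \<partial>gauss) - (\<integral>y. f y \<partial>gauss) - t * (\<integral>y. f y * (u \<bullet> y) \<partial>gauss)
        = (\<integral>y. F y \<partial>gauss)"
      by simp
    also have "\<bar>\<dots>\<bar> \<le> (\<integral>y. t\<^sup>2 * G y \<partial>gauss)"
      by (rule integral_abs_bound_integral[OF int_F integrable_mult_right[OF int_G] F_le])
    also have "\<dots> = integral\<^sup>L gauss G * t\<^sup>2"
      by simp
    finally show "\<bar>(\<integral>z. f (z + t *\<^sub>R u) \<partial>gauss) - (\<integral>y. f y \<partial>gauss)
        - t * (\<integral>y. f y * (u \<bullet> y) \<partial>gauss)\<bar> \<le> integral\<^sup>L gauss G * t\<^sup>2" .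
  qed
qed

lemma le_of_forall_le_add_mult:
  fixes x y C :: real
  assumes "\<And>t. 0 < t \<Longrightarrow> t \<le> 1 \<Longrightarrow> x \<le> y + C * t"
  shows "x \<le> y"
proof (rule field_le_epsilon)
  fix e :: real
  assume "0 < e"
  define t where "t = min 1 (e / (\<bar>C\<bar> + 1))"
  have "t \<le> e / (\<bar>C\<bar> + 1)"
    by (simp add: t_def)
  then have "\<bar>C\<bar> * t + t \<le> e"
    by (subst (asm) pos_le_divide_eq) (auto simp: algebra_simps)
  moreover have "0 < t" "t \<le> 1"
    using \<open>0 < e\<close> by (auto simp: t_def)
  moreover have "C * t \<le> \<bar>C\<bar> * t"
    using \<open>0 < t\<close> by (intro mult_right_mono) auto
  ultimately show "x \<le> y + e"
    using assms[of t] by linarith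
qed

text \<open>
  Gaussian integration by parts in integrated form: \<open>\<integral> f(y) \<langle>u, y\<rangle> d\<phi>\<close> is the derivative
  at \<open>t = 0\<close> of \<open>\<integral> f(z + t u) d\<phi>\<close>.
\<close>
lemma integral_gauss_first_variation_le:
  fixes f g :: "'a::euclidean_space \<Rightarrow> real" and u :: 'a
  assumes f_meas [measurable]: "f \<in> borel_measurable borel" and growth: "exp_growth f"
    and int_g: "integrable gauss g"
    and step: "\<And>z t. 0 < t \<Longrightarrow> t \<le> 1 \<Longrightarrow> f (z + t *\<^sub>R u) \<le> f z + t * g z"
  shows "(\<integral>y. f y * (u \<bullet> y) \<partial>gauss) \<le> (\<integral>z. g z \<partial>gauss)"
proof -
  obtain C where C: "\<And>t. \<bar>t\<bar> \<le> 1 \<Longrightarrow>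
      \<bar>(\<integral>z. f (z + t *\<^sub>R u) \<partial>gauss) - (\<integral>y. f y \<partial>gauss) - t * (\<integral>y. f y * (u \<bullet> y) \<partial>gauss)\<bar> \<le> C * t\<^sup>2"
    using integral_gauss_translate_expansion[OF f_meas growth, of u] by blast
  have int_f: "integrable gauss f"
    using growth by (rule integrable_gauss_exp_growth[OF f_meas])
  show ?thesis
  proof (rule le_of_forall_le_add_mult[where C = C])
    fix t :: real
    assume t: "0 < t" "t \<le> 1"
    have "integrable gauss (\<lambda>z. f (z + t *\<^sub>R u))"
      using exp_growth_translate[OF growth] by (rule integrable_gauss_exp_growth[rotated]) simp
    then have "(\<integral>z. f (z + t *\<^sub>R u) \<partial>gauss) \<le> (\<integral>z. f z + t * g z \<partial>gauss)"
      using int_f int_g step[OF t] by (intro integral_mono) auto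
    also have "\<dots> = (\<integral>z. f z \<partial>gauss) + t * (\<integral>z. g z \<partial>gauss)"
      using int_f int_g by simp
    finally have "t * (\<integral>y. f y * (u \<bullet> y) \<partial>gauss) \<le> t * ((\<integral>z. g z \<partial>gauss) + C * t)"
      using C[of t] t by (simp add: abs_le_iff power2_eq_square algebra_simps)
    then show "(\<integral>y. f y * (u \<bullet> y) \<partial>gauss) \<le> (\<integral>z. g z \<partial>gauss) + C * t"
      using t(1) by (simp add: mult_le_cancel_left_pos)
  qed
qed

lemma continuous_nonneg_integral_gauss_eq_0:
  fixes f :: "'a::euclidean_space \<Rightarrow> real"
  assumes "continuous_on UNIV f" "integrable gauss f" "\<And>x. 0 \<le> f x"
    and "(\<integral>x. f x \<partial>gauss) = 0"
  shows "f x = 0"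
proof -
  have "AE x in gauss. f x = 0"
    using integral_nonneg_eq_0_iff_AE[of gauss f] assms(2-4) by auto
  then have "AE x in lborel. f x = 0"
    unfolding gauss_def by (subst (asm) AE_density) (auto simp: gauss_density_pos)
  then have "AE x in lebesgue. f x = 0"
    by (rule AE_completion)
  then obtain N where "negligible N" "{x. f x \<noteq> 0} \<subseteq> N"
    unfolding eventually_ae_filter_negligible by blast
  then have "negligible {x. f x \<noteq> 0}"
    using negligible_subset by blast
  moreover have "open {x. f x \<noteq> 0}"
    using open_vimage[OF open_Compl[OF closed_singleton[of 0]] assms(1)] by (simp add: vimage_def)
  ultimately show ?thesis
    using open_not_negligible by blast
qed

lemma convex_bodyD:
  assumes "convex_body A"
  shows "convex A" "closed A" "bounded A" "A \<noteq> {}"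
  using assms by (auto simp: convex_body_def compact_eq_bounded_closed)

lemma inner_center_eq_integral:
  fixes A :: "'a::euclidean_space set"
  assumes A: "bounded A" "A \<noteq> {}"
  shows "u \<bullet> center A = (\<integral>y. supp A y * (u \<bullet> y) \<partial>gauss)"
proof -
  have "integrable gauss (\<lambda>y. supp A y *\<^sub>R y)"
    using borel_measurable_supp[OF A]
    by (intro integrable_gauss_exp_growth exp_growth_scaleR exp_growth_supp[OF A] exp_growth_id) auto
  then show ?thesis
    unfolding center_def by (simp flip: integral_inner_right)
qed

lemma inner_center_le_supp:
  fixes A :: "'a::euclidean_space set"
  assumes A: "bounded A" "A \<noteq> {}"
  shows "u \<bullet> center A \<le> supp A u"
proof -
  interpret prob_space "gauss :: 'a measure"
    by (rule prob_space_gauss)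
  have "(\<integral>y. supp A y * (u \<bullet> y) \<partial>gauss) \<le> (\<integral>z. supp A u \<partial>(gauss :: 'a measure))"
  proof (rule integral_gauss_first_variation_le[OF borel_measurable_supp[OF A] exp_growth_supp[OF A]])
    fix z :: 'a and t :: real
    assume "0 < t" "t \<le> 1"
    then show "supp A (z + t *\<^sub>R u) \<le> supp A z + t * supp A u"
      using supp_add_le[OF A, of z "t *\<^sub>R u"] supp_scaleR[OF A, of t u] by simp
  qed simp
  then show ?thesis
    using inner_center_eq_integral[OF A] prob_space by simp
qed

lemma center_mem:
  fixes A :: "'a::euclidean_space set"
  assumes "convex_body A"
  shows "center A \<in> A"
proof (rule ccontr)
  assume "center A \<notin> A"
  note A = convex_bodyD[OF assms]
  obtain a b where ab: "a \<bullet> center A < b" "\<forall>x\<in>A. b < a \<bullet> x"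
    using separating_hyperplane_closed_point[OF A(1,2) \<open>center A \<notin> A\<close>] by blast
  have "supp A (- a) \<le> - b"
    using A(4) by (rule supp_least) (use ab(2) in \<open>force simp: inner_commute\<close>)
  moreover have "(- a) \<bullet> center A \<le> supp A (- a)"
    using inner_center_le_supp[OF A(3,4)] .
  ultimately show False
    using ab(1) by simp
qed

lemma integrable_gauss_supp_mult:
  fixes A B :: "'a::euclidean_space set"
  assumes A: "bounded A" "A \<noteq> {}" and B: "bounded B" "B \<noteq> {}"
  shows "integrable gauss (\<lambda>x. supp A x * supp B x)"
  using exp_growth_scaleR[OF exp_growth_supp[OF A] exp_growth_supp[OF B]]
    borel_measurable_supp[OF A] borel_measurable_supp[OF B]
  by (intro integrable_gauss_exp_growth borel_measurable_times) auto

lemma supp_uminus_eq_0_if_centered: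
  fixes A :: "'a::euclidean_space set"
  assumes "convex_body A" and centered: "center A = 0" and zero: "supp A u = 0"
  shows "supp A (- u) = 0"
proof -
  note A = convex_bodyD(3,4)[OF assms(1)]
  have growth: "exp_growth (supp A)"
    by (rule exp_growth_supp[OF A])
  have [measurable]: "supp A \<in> borel_measurable borel"
    by (rule borel_measurable_supp[OF A])
  define D where "D z = supp A z - supp A (z + u)" for z
  have D_nonneg: "0 \<le> D z" for z
    using supp_add_le[OF A, of z u] zero by (simp add: D_def)
  have int_D: "integrable gauss D"
    unfolding D_def using growth exp_growth_translate[OF growth]
    by (intro Bochner_Integration.integrable_diff integrable_gauss_exp_growth) auto
  have "(\<integral>y. supp A y * (u \<bullet> y) \<partial>gauss) \<le> (\<integral>z. - D z \<partial>gauss)"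
  proof (rule integral_gauss_first_variation_le[OF _ growth integrable_minus[OF int_D]])
    fix z :: 'a and t :: real
    assume "0 < t" "t \<le> 1"
    then have "supp A ((1 - t) *\<^sub>R z + t *\<^sub>R (z + u)) \<le> (1 - t) * supp A z + t * supp A (z + u)"
      using convex_on_supp[OF A] by (intro convex_onD) auto
    then show "supp A (z + t *\<^sub>R u) \<le> supp A z + t * - D z"
      by (simp add: D_def algebra_simps)
  qed simp
  then have "(\<integral>z. D z \<partial>gauss) = 0"
    using inner_center_eq_integral[OF A, of u] centered D_nonneg
    by (simp add: integral_nonneg antisym)
  moreover have "continuous_on UNIV D"
    unfolding D_def using continuous_on_supp[OF A]
    by (intro continuous_intros continuous_on_compose2[OF continuous_on_supp[OF A]]) auto
  ultimately have "D (- u) = 0"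
    using continuous_nonneg_integral_gauss_eq_0[OF _ int_D D_nonneg] by blast
  then show ?thesis
    using supp_scaleR[OF A, of 0 0] by (simp add: D_def)
qed

lemma centered_supp_pos_common:
  fixes A B :: "'a::euclidean_space set"
  assumes cA: "convex_body A" and cB: "convex_body B"
    and kA: "center A = 0" and kB: "center B = 0"
    and "A \<noteq> {0}" "B \<noteq> {0}"
  obtains x where "0 < supp A x" "0 < supp B x"
proof -
  note A = convex_bodyD(3,4)[OF cA] and B = convex_bodyD(3,4)[OF cB]
  have "0 \<in> A" "0 \<in> B"
    using center_mem[OF cA] center_mem[OF cB] kA kB by auto
  with assms(5,6) obtain a b where ab: "a \<in> A" "a \<noteq> 0" "b \<in> B" "b \<noteq> 0"
    by blast
  have pos: "0 < supp A a" "0 < supp B b"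
    using supp_upper[OF A(1) ab(1), of a] supp_upper[OF B(1) ab(3), of b] ab(2,4)
    by (meson inner_gt_zero_iff less_le_trans)+
  have nonneg: "0 \<le> supp A x" "0 \<le> supp B x" for x
    using supp_nonneg A(1) B(1) \<open>0 \<in> A\<close> \<open>0 \<in> B\<close> by blast+
  consider "0 < supp B a" | "0 < supp A b" | "supp B a = 0" "supp A b = 0"
    using nonneg[of a] nonneg[of b] by fastforce
  then show ?thesis
  proof cases
    case 3
    then have "supp A (- b) = 0" "supp B (- a) = 0"
      using supp_uminus_eq_0_if_centered cA cB kA kB by blast+
    then have "supp A a \<le> supp A (a + b)" "supp B b \<le> supp B (a + b)"
      using supp_add_le[OF A, of "a + b" "- b"] supp_add_le[OF B, of "a + b" "- a"] by simp_all
    then show ?thesis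
      using that[of "a + b"] pos by simp
  qed (use that pos in blast)+
qed

lemma set_inner_centered_eq_0_iff:
  fixes A B :: "'a::euclidean_space set"
  assumes cA: "convex_body A" and cB: "convex_body B"
    and kA: "center A = 0" and kB: "center B = 0"
  shows "set_inner A B = 0 \<longleftrightarrow> A = {0} \<or> B = {0}"
proof
  assume inner_0: "set_inner A B = 0"
  show "A = {0} \<or> B = {0}"
  proof (rule ccontr)
    assume "\<not> (A = {0} \<or> B = {0})"
    then obtain x where x: "0 < supp A x" "0 < supp B x"
      using centered_supp_pos_common[OF cA cB kA kB] by blast
    note A = convex_bodyD(3,4)[OF cA] and B = convex_bodyD(3,4)[OF cB]
    have "0 \<in> A" "0 \<in> B"
      using center_mem[OF cA] center_mem[OF cB] kA kB by auto
    have "supp A x * supp B x = 0"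
    proof (rule continuous_nonneg_integral_gauss_eq_0[where f = "\<lambda>x. supp A x * supp B x"])
      show "continuous_on UNIV (\<lambda>x. supp A x * supp B x)"
        using continuous_on_supp[OF A] continuous_on_supp[OF B] by (rule continuous_on_mult)
      show "integrable gauss (\<lambda>x. supp A x * supp B x)"
        by (rule integrable_gauss_supp_mult[OF A B])
      show "0 \<le> supp A y * supp B y" for y
        using supp_nonneg[OF A(1) \<open>0 \<in> A\<close>] supp_nonneg[OF B(1) \<open>0 \<in> B\<close>] by simp
      show "(\<integral>x. supp A x * supp B x \<partial>gauss) = 0"
        using inner_0 by (simp add: set_inner_def)
    qed
    with x show False
      by simp
  qed
next
  assume "A = {0} \<or> B = {0}"
  then show "set_inner A B = 0"
    by (auto simp: set_inner_def)
qed

lemma set_inner_self_mono: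
  fixes A B :: "'a::euclidean_space set"
  assumes "convex_body A" "convex_body B" "0 \<in> A" "A \<subseteq> B"
  shows "set_inner A A \<le> set_inner B B"
proof -
  note A = convex_bodyD(3,4)[OF assms(1)] and B = convex_bodyD(3,4)[OF assms(2)]
  have "supp A x * supp A x \<le> supp B x * supp B x" for x
    using supp_nonneg[OF A(1) assms(3)] supp_mono[OF A(2) B(1) assms(4)]
    by (intro mult_mono) (auto intro: order_trans)
  then show ?thesis
    unfolding set_inner_def
    by (intro integral_mono integrable_gauss_supp_mult A B)
qed

theorem proposition6:
  fixes dummy :: "'a::euclidean_space"
  shows "(\<forall>A::'a set. convex_body A \<longrightarrow> center A \<in> A)
    \<and> (\<forall>A B::'a set. convex_body A \<and> convex_body B \<and> center A = 0 \<and> center B = 0 \<longrightarrow>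
          (set_inner A B = 0 \<longleftrightarrow> A = {0} \<or> B = {0}))
    \<and> (\<forall>A B::'a set. convex_body A \<and> convex_body B \<and> 0 \<in> A \<and> A \<subseteq> B \<longrightarrow>
          set_inner A A \<le> set_inner B B)"
  using center_mem set_inner_centered_eq_0_iff set_inner_self_mono by blast

end
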